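(* Let $a,b\in\mathbb C$ and let $x$ be an indeterminate. For integers $0\le p\le k$, set $g_i=P^k_{p+i}(x;a,b)$ for $i=0,\dots,k-p$. Then $$\sum_{i=0}^{k-p}(-1)^{k-p-i}\binom{k-p}{i}g_i=\prod_{i=0}^{p-1}(x+b-i)\prod_{i=0}^{k-p-1}(b-a-p-i).$$
   Context: For integers $0\le i\le k$, $P_i^k(x;a,b):=\prod_{j=0}^{k-i-1}(x+j+a)\prod_{j=0}^{i-1}(x-j+b)$ (empty products equal $1$). *)

theory Defs
  imports "HOL-Computational_Algebra.Polynomial" Complex_Main
begin

definition Ppoly :: "nat \<Rightarrow> nat \<Rightarrow> complex \<Rightarrow> complex \<Rightarrow> complex poly" where
  "Ppoly k i a b =
     (\<Prod>j<k - i. [:of_nat j + a, 1:]) * (\<Prod>j<i. [:b - of_nat j, 1:])"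

end

theory Submission
  imports Defs
begin

text \<open>With \<open>ff z n = z (z-1) \<dots> (z-n+1)\<close> and the rising factorial \<open>rf\<close> (\<open>pochhammer\<close>),
  \<open>P\<^sup>k\<^sub>p\<^sub>+\<^sub>i = rf (x+a) (n-i) \<cdot> ff (x+b) p \<cdot> ff (x+b-p) i\<close> with \<open>n = k - p\<close>. After factoring out
  \<open>ff (x+b) p\<close>, the alternating sum is the Vandermonde convolution
  \<open>\<Sum>\<^sub>i (-1)\<^sup>n\<^sup>-\<^sup>i C(n,i) ff y i \<cdot> rf x (n-i) = ff (y-x) n\<close>, and here \<open>y - x = b - a - p\<close> is a constant.\<close>

definition falling_factorial :: "'a::comm_ring_1 \<Rightarrow> nat \<Rightarrow> 'a" where
  "falling_factorial z n = (\<Prod>j<n. z - of_nat j)"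

lemma falling_factorial_eq_pochhammer:
  "falling_factorial z n = (-1) ^ n * pochhammer (- z) n"
  by (induction n) (simp_all add: falling_factorial_def pochhammer_rec' algebra_simps)

lemma falling_factorial_add:
  "falling_factorial z (m + n) = falling_factorial z m * falling_factorial (z - of_nat m) n"
  by (induction n) (simp_all add: falling_factorial_def algebra_simps)

lemma alternating_vandermonde_falling_factorial:
  fixes x y :: "'a::comm_ring_1"
  shows "(\<Sum>i\<le>n. (-1) ^ (n - i) * of_nat (n choose i) * falling_factorial y i * pochhammer x (n - i))
       = falling_factorial (y - x) n"
proof -
  have "(-1) ^ (n - i) * of_nat (n choose i) * falling_factorial y i * pochhammer x (n - i)
      = (-1) ^ n * (of_nat (n choose i) * pochhammer (- y) i * pochhammer x (n - i))"
    if "i \<le> n" for i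
  proof -
    have sign: "(-1) ^ (n - i) * (-1) ^ i = ((-1) ^ n :: 'a)"
      using that by (simp flip: power_add)
    show ?thesis
      unfolding falling_factorial_eq_pochhammer sign[symmetric] by (simp only: mult_ac)
  qed
  then have "(\<Sum>i\<le>n. (-1) ^ (n - i) * of_nat (n choose i) * falling_factorial y i * pochhammer x (n - i))
      = (-1) ^ n * (\<Sum>i\<le>n. of_nat (n choose i) * pochhammer (- y) i * pochhammer x (n - i))"
    by (simp add: sum_distrib_left)
  also have "\<dots> = (-1) ^ n * pochhammer (- (y - x)) n"
    by (simp add: pochhammer_binomial_sum[symmetric])
  finally show ?thesis by (simp add: falling_factorial_eq_pochhammer)
qed

lemma falling_factorial_const_poly: "falling_factorial [:c:] n = [:falling_factorial c n:]"
  by (induction n) (simp_all add: falling_factorial_def of_nat_poly)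

lemma smult_sign_binomial: "smult ((-1) ^ m * of_nat c) q = (-1) ^ m * of_nat c * q"
  for q :: "'a::comm_ring_1 poly"
proof -
  have "[:(-1) ^ m * of_nat c:] = (of_int ((-1) ^ m * int c) :: 'a poly)"
    by (simp only: of_int_poly) simp
  also have "\<dots> = (-1) ^ m * of_nat c" by simp
  finally have const: "[:(-1) ^ m * of_nat c:] = (-1) ^ m * (of_nat c :: 'a poly)" .
  have "smult ((-1) ^ m * of_nat c) q = [:(-1) ^ m * of_nat c:] * q" by simp
  then show ?thesis by (simp only: const)
qed

lemma Ppoly_eq_pochhammer_falling_factorial:
  "Ppoly k i a b = pochhammer [:a, 1:] (k - i) * falling_factorial [:b, 1:] i"
proof -
  have "(\<Prod>j<k - i. [:of_nat j + a, 1:]) = pochhammer [:a, 1:] (k - i)"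
    unfolding pochhammer_prod by (rule prod.cong) (auto simp: of_nat_poly)
  moreover have "(\<Prod>j<i. [:b - of_nat j, 1:]) = falling_factorial [:b, 1:] i"
    unfolding falling_factorial_def by (rule prod.cong) (auto simp: of_nat_poly)
  ultimately show ?thesis by (simp add: Ppoly_def)
qed

theorem proposition4:
  fixes a b :: complex and p k :: nat
  assumes "p \<le> k"
  shows "(\<Sum>i\<le>k - p. smult ((-1) ^ (k - p - i) * of_nat (k - p choose i)) (Ppoly k (p + i) a b))
       = (\<Prod>i<p. [:b - of_nat i, 1:]) * [:(\<Prod>i<k - p. b - a - of_nat p - of_nat i):]"
proof -
  define n where "n = k - p"
  define x where "x = [:a, 1:]"
  define y where "y = [:b, 1:] - of_nat p"
  have "k - (p + i) = n - i" for i
    using assms by (simp add: n_def)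
  then have summand: "smult ((-1) ^ (n - i) * of_nat (n choose i)) (Ppoly k (p + i) a b)
      = falling_factorial [:b, 1:] p
        * ((-1) ^ (n - i) * of_nat (n choose i) * falling_factorial y i * pochhammer x (n - i))" for i
    unfolding smult_sign_binomial
    by (simp add: Ppoly_eq_pochhammer_falling_factorial falling_factorial_add x_def y_def mult_ac)
  have "(\<Sum>i\<le>k - p. smult ((-1) ^ (k - p - i) * of_nat (k - p choose i)) (Ppoly k (p + i) a b))
      = falling_factorial [:b, 1:] p
        * (\<Sum>i\<le>n. (-1) ^ (n - i) * of_nat (n choose i) * falling_factorial y i * pochhammer x (n - i))"
    unfolding n_def[symmetric] sum_distrib_left by (simp only: summand)
  also have "\<dots> = falling_factorial [:b, 1:] p * falling_factorial (y - x) n"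
    by (simp only: alternating_vandermonde_falling_factorial)
  also have "y - x = [:b - a - of_nat p:]"
    by (simp add: x_def y_def of_nat_poly)
  also have "falling_factorial [:b - a - of_nat p:] n = [:\<Prod>i<k - p. b - a - of_nat p - of_nat i:]"
    unfolding falling_factorial_const_poly by (simp add: falling_factorial_def n_def)
  also have "falling_factorial [:b, 1:] p = (\<Prod>i<p. [:b - of_nat i, 1:])"
    unfolding falling_factorial_def by (rule prod.cong) (simp_all add: of_nat_poly)
  finally show ?thesis .
qed

end
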